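(* Assume $-\infty<l<r<\infty$, $\inf\operatorname{supp}\mu>-\infty$ and $\sup\operatorname{supp}\mu<\infty$. If $\limsup_{x\searrow l}\frac{|\eta(x)|}{x-l}<\infty$, then: $q(l+)=\infty$ implies $\liminf_{y\searrow l}G_y(\bar a(y))>0$. If $\limsup_{x\nearrow r}\frac{|\eta(x)|}{r-x}<\infty$, then: $q(r-)=\infty$ implies $\liminf_{y\nearrow r}G_y(\bar a(y))>0$.
   Context: Let $I=(l,r)$, $\eta\colon\mathbb R\to\mathbb R$ Borel with $\eta\ne0$ on $I$, $1/\eta^2\in L^1_{\mathrm{loc}}(I)$, $\eta=0$ off $I$, $m\in I$. $q(y,x)=\int_y^x\int_y^u\frac{2}{\eta^2(z)}dz\,du\in[0,\infty]$; $q(l+)=\lim_{x\searrow l}q(m,x)$, $q(r-)=\lim_{x\nearrow r}q(m,x)$. $\mu\ne\delta_0$ is a centered probability measure, $G_y(a)=\int q(y,y+ax)\mu(dx)$, and $\bar a(y)=\frac{l-y}{\inf\operatorname{supp}\mu}\wedge\frac{r-y}{\sup\operatorname{supp}\mu}$ for $y\in I$. *)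

theory Defs
  imports "HOL-Probability.Probability"
begin

text \<open>The integrand 2/eta(z)^2, with the convention 2/0 = infinity (eta vanishes off I).\<close>
definition inv_eta2 :: "(real \<Rightarrow> real) \<Rightarrow> real \<Rightarrow> ennreal" where
  "inv_eta2 \<eta> z = (if \<eta> z = 0 then \<infinity> else ennreal (2 / (\<eta> z)\<^sup>2))"

text \<open>q(y,x) = int_y^x int_y^u 2/eta^2(z) dz du, oriented integrals; for x < y both
  orientations flip, giving int_x^y int_u^y.\<close>
definition qfun :: "(real \<Rightarrow> real) \<Rightarrow> real \<Rightarrow> real \<Rightarrow> ennreal" where
  "qfun \<eta> y x =
     (if y \<le> x then (\<integral>\<^sup>+ u \<in> {y..x}. (\<integral>\<^sup>+ z \<in> {y..u}. inv_eta2 \<eta> z \<partial>lborel) \<partial>lborel)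
      else (\<integral>\<^sup>+ u \<in> {x..y}. (\<integral>\<^sup>+ z \<in> {u..y}. inv_eta2 \<eta> z \<partial>lborel) \<partial>lborel))"

definition msupp :: "real measure \<Rightarrow> real set" where
  "msupp \<mu> = {x. \<forall>e>0. emeasure \<mu> (ball x e) > 0}"

definition Gfun :: "(real \<Rightarrow> real) \<Rightarrow> real measure \<Rightarrow> real \<Rightarrow> real \<Rightarrow> ennreal" where
  "Gfun \<eta> \<mu> y a = (\<integral>\<^sup>+ x. qfun \<eta> y (y + a * x) \<partial>\<mu>)"

definition abar :: "real \<Rightarrow> real \<Rightarrow> real measure \<Rightarrow> real \<Rightarrow> real" where
  "abar l r \<mu> y = min ((l - y) / Inf (msupp \<mu>)) ((r - y) / Sup (msupp \<mu>))"

end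

theory Submission
  imports Defs
begin

text \<open>Write \<open>\<alpha> = inf supp \<mu> < 0 < \<beta> = sup supp \<mu>\<close>. For y near l the minimum defining
  \<open>a\<^sub>y = abar(y)\<close> is attained at \<open>(y - l) / |\<alpha>|\<close>, so every point \<open>y + a\<^sub>y x\<close> with x in the support
  lies in an interval of length \<open>a\<^sub>y (\<beta> - \<alpha>)\<close> that contains l. On that interval the linear bound
  \<open>|\<eta> z| \<le> C |z - l|\<close> gives \<open>2/\<eta>\<^sup>2 \<ge> 2 / (C a\<^sub>y (\<beta> - \<alpha>))\<^sup>2\<close>, hence
  \<open>q(y, y + a\<^sub>y x) \<ge> x\<^sup>2 / (2 C\<^sup>2 (\<beta> - \<alpha>)\<^sup>2)\<close>, and integrating against \<mu> bounds \<open>G\<^sub>y(a\<^sub>y)\<close> below by a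
  positive multiple of the variance of \<mu>, uniformly in y.\<close>

lemma nn_integral_Icc_ge_const:
  fixes g :: "real \<Rightarrow> ennreal"
  assumes "k \<ge> 0" "a \<le> a'" "a' \<le> b'" "b' \<le> b"
    and "\<And>u. a' \<le> u \<Longrightarrow> u \<le> b' \<Longrightarrow> ennreal k \<le> g u"
  shows "ennreal (k * (b' - a')) \<le> (\<integral>\<^sup>+ u \<in> {a..b}. g u \<partial>lborel)"
proof -
  have "ennreal (k * (b' - a')) = (\<integral>\<^sup>+ u. ennreal k * indicator {a'..b'} u \<partial>lborel)"
    using assms(1,3) by (simp add: nn_integral_cmult_indicator ennreal_mult)
  also have "\<dots> \<le> (\<integral>\<^sup>+ u \<in> {a..b}. g u \<partial>lborel)"
    using assms(2-5) by (intro nn_integral_mono) (auto simp: indicator_def)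
  finally show ?thesis .
qed

lemma qfun_ge_const:
  assumes c: "c \<ge> 0"
    and bound: "\<And>z. min y (y + t) \<le> z \<Longrightarrow> z \<le> max y (y + t) \<Longrightarrow> ennreal c \<le> inv_eta2 \<eta> z"
  shows "ennreal (c * t\<^sup>2 / 4) \<le> qfun \<eta> y (y + t)"
proof (cases "t \<ge> 0")
  case True
  have "ennreal (c * t / 2 * (y + t - (y + t / 2)))
        \<le> (\<integral>\<^sup>+ u \<in> {y..y + t}. (\<integral>\<^sup>+ z \<in> {y..u}. inv_eta2 \<eta> z \<partial>lborel) \<partial>lborel)"
  proof (rule nn_integral_Icc_ge_const)
    fix u assume u: "y + t / 2 \<le> u" "u \<le> y + t"
    have "ennreal (c * t / 2) \<le> ennreal (c * (u - y))"
      using mult_left_mono[of "t / 2" "u - y" c] u c by (intro ennreal_leI) simp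
    also have "ennreal (c * (u - y)) \<le> (\<integral>\<^sup>+ z \<in> {y..u}. inv_eta2 \<eta> z \<partial>lborel)"
      using u True by (intro nn_integral_Icc_ge_const c bound) auto
    finally show "ennreal (c * t / 2) \<le> (\<integral>\<^sup>+ z \<in> {y..u}. inv_eta2 \<eta> z \<partial>lborel)" .
  qed (use True c in auto)
  then show ?thesis
    using True by (simp add: qfun_def power2_eq_square field_simps)
next
  case False
  have "ennreal (c * (- t) / 2 * (y + t / 2 - (y + t)))
        \<le> (\<integral>\<^sup>+ u \<in> {y + t..y}. (\<integral>\<^sup>+ z \<in> {u..y}. inv_eta2 \<eta> z \<partial>lborel) \<partial>lborel)"
  proof (rule nn_integral_Icc_ge_const)
    fix u assume u: "y + t \<le> u" "u \<le> y + t / 2"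
    have "ennreal (c * (- t) / 2) \<le> ennreal (c * (y - u))"
      using mult_left_mono[of "- t / 2" "y - u" c] u c by (intro ennreal_leI) simp
    also have "ennreal (c * (y - u)) \<le> (\<integral>\<^sup>+ z \<in> {u..y}. inv_eta2 \<eta> z \<partial>lborel)"
      using u False by (intro nn_integral_Icc_ge_const c bound) auto
    finally show "ennreal (c * (- t) / 2) \<le> (\<integral>\<^sup>+ z \<in> {u..y}. inv_eta2 \<eta> z \<partial>lborel)" .
  qed (use False c in \<open>auto simp: mult_nonneg_nonpos\<close>)
  then show ?thesis
    using False by (simp add: qfun_def power2_eq_square field_simps)
qed

lemma inv_eta2_ge:
  assumes "B > 0" "\<bar>\<eta> z\<bar> \<le> B"
  shows "ennreal (2 / B\<^sup>2) \<le> inv_eta2 \<eta> z"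
proof (cases "\<eta> z = 0")
  case False
  then have "(\<eta> z)\<^sup>2 \<le> B\<^sup>2"
    using assms by (metis abs_le_square_iff abs_of_pos)
  then have "2 / B\<^sup>2 \<le> 2 / (\<eta> z)\<^sup>2"
    using False assms(1) by (intro divide_left_mono) auto
  then show ?thesis
    using False by (simp add: inv_eta2_def ennreal_leI)
qed (simp add: inv_eta2_def)

lemma Gfun_ge_second_moment:
  assumes ae: "AE x in \<mu>. \<alpha> \<le> x \<and> x \<le> \<beta>" and "\<alpha> \<le> 0" "0 \<le> \<beta>" "a \<ge> 0" "B > 0"
    and eta: "\<And>z. y + a * \<alpha> \<le> z \<Longrightarrow> z \<le> y + a * \<beta> \<Longrightarrow> \<bar>\<eta> z\<bar> \<le> B"
  shows "(\<integral>\<^sup>+ x. ennreal ((a * x)\<^sup>2 / (2 * B\<^sup>2)) \<partial>\<mu>) \<le> Gfun \<eta> \<mu> y a"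
  unfolding Gfun_def
proof (rule nn_integral_mono_AE, rule AE_mp[OF ae], intro AE_I2 impI)
  fix x assume x: "\<alpha> \<le> x \<and> x \<le> \<beta>"
  have "a * \<alpha> \<le> a * x" "a * x \<le> a * \<beta>" "a * \<alpha> \<le> 0" "0 \<le> a * \<beta>"
    using x assms(2-4) by (auto intro: mult_left_mono mult_nonneg_nonpos)
  then have "ennreal (2 / B\<^sup>2 * (a * x)\<^sup>2 / 4) \<le> qfun \<eta> y (y + a * x)"
    by (intro qfun_ge_const inv_eta2_ge \<open>B > 0\<close> eta) auto
  then show "ennreal ((a * x)\<^sup>2 / (2 * B\<^sup>2)) \<le> qfun \<eta> y (y + a * x)"
    by (simp add: field_simps)
qed

lemma not_AE_eq_zero:
  fixes \<mu> :: "real measure"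
  assumes prob: "prob_space \<mu>" and sets: "sets \<mu> = sets borel" and "\<mu> \<noteq> return borel 0"
  shows "\<not> (AE x in \<mu>. x = 0)"
proof
  assume ae: "AE x in \<mu>. x = 0"
  have space: "space \<mu> = UNIV"
    using sets_eq_imp_space_eq[OF sets] by simp
  have "\<mu> = return borel 0"
  proof (rule measure_eqI)
    show "sets \<mu> = sets (return borel 0)"
      using sets by simp
    fix A assume A: "A \<in> sets \<mu>"
    show "emeasure \<mu> A = emeasure (return borel 0) A"
    proof (cases "(0::real) \<in> A")
      case True
      then have "emeasure \<mu> A = emeasure \<mu> (space \<mu>)"
        using ae A sets.top[of \<mu>] by (intro emeasure_eq_AE) (auto simp: space)
      then show ?thesis
        using True A sets prob_space.emeasure_space_1[OF prob] by simp
    next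
      case False
      then have "emeasure \<mu> A = emeasure \<mu> {}"
        using ae A by (intro emeasure_eq_AE) auto
      then show ?thesis
        using False A sets by simp
    qed
  qed
  with assms(3) show False ..
qed

lemma nn_integral_square_pos:
  fixes \<mu> :: "real measure"
  assumes sets: "sets \<mu> = sets borel" and nonzero: "\<not> (AE x in \<mu>. x = 0)" and "K > 0"
  shows "0 < (\<integral>\<^sup>+ x. ennreal (x\<^sup>2 / K) \<partial>\<mu>)"
proof -
  have "(\<lambda>x. ennreal (x\<^sup>2 / K)) \<in> borel_measurable \<mu>"
    using sets by (simp add: measurable_cong_sets[OF sets refl])
  moreover have "\<not> (AE x in \<mu>. ennreal (x\<^sup>2 / K) = 0)"
    using nonzero \<open>K > 0\<close> by (auto elim!: AE_mp simp: ennreal_eq_0_iff divide_le_0_iff)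
  ultimately show ?thesis
    by (simp add: nn_integral_0_iff_AE zero_less_iff_neq_zero)
qed

lemma AE_in_msupp:
  fixes \<mu> :: "real measure"
  assumes sets: "sets \<mu> = sets borel"
  shows "AE x in \<mu>. x \<in> msupp \<mu>"
proof -
  define \<F> where "\<F> = {ball x e | x e. emeasure \<mu> (ball x e) = 0}"
  have open_\<F>: "\<And>S. S \<in> \<F> \<Longrightarrow> open S"
    by (auto simp: \<F>_def)
  obtain \<F>' where \<F>': "\<F>' \<subseteq> \<F>" "countable \<F>'" "\<Union>\<F>' = \<Union>\<F>"
    using Lindelof[OF open_\<F>] by blast
  have "(\<Union>S\<in>\<F>'. S) \<in> null_sets \<mu>"
    using \<F>'(1) by (intro null_sets_UN' \<F>'(2)) (auto simp: \<F>_def sets null_setsI)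
  moreover have "{x \<in> space \<mu>. x \<notin> msupp \<mu>} \<subseteq> (\<Union>S\<in>\<F>'. S)"
  proof clarify
    fix x assume "x \<notin> msupp \<mu>"
    then obtain e where "e > 0" "emeasure \<mu> (ball x e) = 0"
      by (auto simp: msupp_def not_less)
    then have "x \<in> \<Union>\<F>"
      unfolding \<F>_def by (intro UnionI[of "ball x e"]) auto
    then show "x \<in> (\<Union>S\<in>\<F>'. S)"
      using \<F>'(3) by simp
  qed
  ultimately show ?thesis
    by (rule AE_I')
qed

lemma centered_bounds_sign:
  fixes \<mu> :: "real measure"
  assumes "integrable \<mu> (\<lambda>x. x)" "(\<integral>x. x \<partial>\<mu>) = 0" "\<not> (AE x in \<mu>. x = 0)"
    and ae: "AE x in \<mu>. \<alpha> \<le> x \<and> x \<le> \<beta>"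
  shows "\<alpha> < 0" "0 < \<beta>"
proof -
  show "\<alpha> < 0"
  proof (rule ccontr)
    assume "\<not> \<alpha> < 0"
    then have "AE x in \<mu>. 0 \<le> x"
      using ae by (auto elim!: AE_mp)
    with assms(1-3) show False
      by (simp add: integral_nonneg_eq_0_iff_AE)
  qed
  show "0 < \<beta>"
  proof (rule ccontr)
    assume "\<not> 0 < \<beta>"
    then have "AE x in \<mu>. 0 \<le> - x"
      using ae by (auto elim!: AE_mp)
    with assms(1-3) show False
      using integral_nonneg_eq_0_iff_AE[of \<mu> "\<lambda>x. - x"] by simp
  qed
qed

lemma Liminf_Gfun_pos_of_eta_linear:
  fixes F :: "real filter" and A :: "real \<Rightarrow> real" and \<mu> :: "real measure"
  assumes sets: "sets \<mu> = sets borel" and nonzero: "\<not> (AE x in \<mu>. x = 0)"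
    and ae: "AE x in \<mu>. \<alpha> \<le> x \<and> x \<le> \<beta>" and "\<alpha> < 0" "0 < \<beta>"
    and "C > 0" "\<delta> > 0" and eta: "\<And>z. \<bar>z - p\<bar> < \<delta> \<Longrightarrow> \<bar>\<eta> z\<bar> \<le> C * \<bar>z - p\<bar>"
    and A_ev: "eventually (\<lambda>y. 0 < A y \<and> y + A y * \<alpha> \<le> p \<and> p \<le> y + A y * \<beta>) F"
    and A_lim: "(A \<longlongrightarrow> 0) F"
  shows "0 < Liminf F (\<lambda>y. Gfun \<eta> \<mu> y (A y))"
proof -
  define D where "D = C * (\<beta> - \<alpha>)"
  have "D > 0"
    using assms by (simp add: D_def)
  have "eventually (\<lambda>y. A y * (\<beta> - \<alpha>) < \<delta>) F"
    using tendsto_mult_left_zero[OF A_lim, of "\<beta> - \<alpha>"] \<open>\<delta> > 0\<close> by (rule order_tendstoD)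
  with A_ev have "eventually (\<lambda>y. (\<integral>\<^sup>+ x. ennreal (x\<^sup>2 / (2 * D\<^sup>2)) \<partial>\<mu>) \<le> Gfun \<eta> \<mu> y (A y)) F"
  proof eventually_elim
    case (elim y)
    define a where "a = A y"
    have a: "0 < a" "y + a * \<alpha> \<le> p" "p \<le> y + a * \<beta>" "a * (\<beta> - \<alpha>) < \<delta>"
      using elim by (auto simp: a_def)
    have "\<bar>\<eta> z\<bar> \<le> D * a" if "y + a * \<alpha> \<le> z" "z \<le> y + a * \<beta>" for z
    proof -
      have "\<bar>z - p\<bar> \<le> a * (\<beta> - \<alpha>)"
        using that a by (simp add: right_diff_distrib abs_le_iff)
      then have "\<bar>\<eta> z\<bar> \<le> C * \<bar>z - p\<bar>"
        using a(4) by (intro eta) linarith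
      also have "\<dots> \<le> C * (a * (\<beta> - \<alpha>))"
        using \<open>\<bar>z - p\<bar> \<le> a * (\<beta> - \<alpha>)\<close> \<open>C > 0\<close> by (intro mult_left_mono) auto
      also have "\<dots> = D * a"
        by (simp add: D_def)
      finally show ?thesis .
    qed
    then have "(\<integral>\<^sup>+ x. ennreal ((a * x)\<^sup>2 / (2 * (D * a)\<^sup>2)) \<partial>\<mu>) \<le> Gfun \<eta> \<mu> y a"
      using ae \<open>\<alpha> < 0\<close> \<open>0 < \<beta>\<close> a(1) \<open>D > 0\<close> by (intro Gfun_ge_second_moment) auto
    moreover have "\<And>x. (a * x)\<^sup>2 / (2 * (D * a)\<^sup>2) = x\<^sup>2 / (2 * D\<^sup>2)"
      using a(1) by (simp add: power_mult_distrib)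
    ultimately show ?case
      by (simp add: a_def)
  qed
  then have "(\<integral>\<^sup>+ x. ennreal (x\<^sup>2 / (2 * D\<^sup>2)) \<partial>\<mu>) \<le> Liminf F (\<lambda>y. Gfun \<eta> \<mu> y (A y))"
    by (rule Liminf_bounded)
  moreover have "0 < (\<integral>\<^sup>+ x. ennreal (x\<^sup>2 / (2 * D\<^sup>2)) \<partial>\<mu>)"
    using sets nonzero \<open>D > 0\<close> by (intro nn_integral_square_pos) auto
  ultimately show ?thesis
    by (rule order.strict_trans2[rotated])
qed

lemma eventually_less_of_Limsup_less_PInf:
  assumes "Limsup F (\<lambda>x. ereal (f x)) < \<infinity>"
  obtains C :: real where "C > 0" "eventually (\<lambda>x. f x < C) F"
proof -
  obtain n :: nat where "Limsup F (\<lambda>x. ereal (f x)) < ereal (real n)"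
    using assms less_PInf_Ex_of_nat by auto
  then have "eventually (\<lambda>x. ereal (f x) < ereal (real n)) F"
    by (rule Limsup_lessD)
  then have "eventually (\<lambda>x. f x < real n + 1) F"
    by eventually_elim simp
  then show thesis
    by (intro that[of "real n + 1"]) auto
qed

lemma eta_linear_bound_at_left_end:
  assumes zero: "\<And>z. z \<le> l \<Longrightarrow> \<eta> z = 0"
    and "Limsup (at_right l) (\<lambda>x. ereal (\<bar>\<eta> x\<bar> / (x - l))) < \<infinity>"
  obtains C \<delta> where "C > 0" "\<delta> > 0" "\<And>z. \<bar>z - l\<bar> < \<delta> \<Longrightarrow> \<bar>\<eta> z\<bar> \<le> C * \<bar>z - l\<bar>"
proof -
  obtain C where "C > 0" "eventually (\<lambda>x. \<bar>\<eta> x\<bar> / (x - l) < C) (at_right l)"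
    using assms(2) by (rule eventually_less_of_Limsup_less_PInf)
  then obtain b where "b > l" and b: "\<And>z. l < z \<Longrightarrow> z < b \<Longrightarrow> \<bar>\<eta> z\<bar> / (z - l) < C"
    unfolding eventually_at_right_field by auto
  have "\<bar>\<eta> z\<bar> \<le> C * \<bar>z - l\<bar>" if "\<bar>z - l\<bar> < b - l" for z
  proof (cases "z \<le> l")
    case False
    then have "\<bar>\<eta> z\<bar> / (z - l) < C"
      using b that by auto
    with False show ?thesis
      by (simp add: pos_divide_less_eq)
  qed (use zero \<open>C > 0\<close> in simp)
  with \<open>C > 0\<close> \<open>b > l\<close> show thesis
    by (intro that[of C "b - l"]) auto
qed

lemma eta_linear_bound_at_right_end:
  assumes zero: "\<And>z. r \<le> z \<Longrightarrow> \<eta> z = 0"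
    and "Limsup (at_left r) (\<lambda>x. ereal (\<bar>\<eta> x\<bar> / (r - x))) < \<infinity>"
  obtains C \<delta> where "C > 0" "\<delta> > 0" "\<And>z. \<bar>z - r\<bar> < \<delta> \<Longrightarrow> \<bar>\<eta> z\<bar> \<le> C * \<bar>z - r\<bar>"
proof -
  obtain C where "C > 0" "eventually (\<lambda>x. \<bar>\<eta> x\<bar> / (r - x) < C) (at_left r)"
    using assms(2) by (rule eventually_less_of_Limsup_less_PInf)
  then obtain b where "b < r" and b: "\<And>z. b < z \<Longrightarrow> z < r \<Longrightarrow> \<bar>\<eta> z\<bar> / (r - z) < C"
    unfolding eventually_at_left_field by auto
  have "\<bar>\<eta> z\<bar> \<le> C * \<bar>z - r\<bar>" if "\<bar>z - r\<bar> < r - b" for z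
  proof (cases "r \<le> z")
    case False
    then have "\<bar>\<eta> z\<bar> / (r - z) < C"
      using b that by auto
    with False show ?thesis
      by (simp add: pos_divide_less_eq abs_minus_commute)
  qed (use zero \<open>C > 0\<close> in simp)
  with \<open>C > 0\<close> \<open>b < r\<close> show thesis
    by (intro that[of C "r - b"]) auto
qed

lemma abar_at_left_end:
  assumes "Inf (msupp \<mu>) = \<alpha>" "Sup (msupp \<mu>) = \<beta>" "\<alpha> < 0" "0 < \<beta>" "l < r"
  shows "eventually (\<lambda>y. 0 < abar l r \<mu> y \<and> y + abar l r \<mu> y * \<alpha> \<le> l \<and> l \<le> y + abar l r \<mu> y * \<beta>)
           (at_right l)"
    and "(abar l r \<mu> \<longlongrightarrow> 0) (at_right l)"
proof -
  have lim: "((\<lambda>y. (r - y) / \<beta> - (l - y) / \<alpha>) \<longlongrightarrow> (r - l) / \<beta> - (l - l) / \<alpha>) (at_right l)"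
    using assms by (intro tendsto_intros) auto
  have "0 < (r - l) / \<beta> - (l - l) / \<alpha>"
    using assms by simp
  then have "eventually (\<lambda>y. 0 < (r - y) / \<beta> - (l - y) / \<alpha>) (at_right l)"
    by (rule order_tendstoD(1)[OF lim])
  then have eq: "eventually (\<lambda>y. abar l r \<mu> y = (l - y) / \<alpha>) (at_right l)"
    by eventually_elim (simp add: abar_def assms(1,2))
  with eventually_at_right_less[of l]
  show "eventually (\<lambda>y. 0 < abar l r \<mu> y \<and> y + abar l r \<mu> y * \<alpha> \<le> l \<and> l \<le> y + abar l r \<mu> y * \<beta>)
          (at_right l)"
  proof eventually_elim
    case (elim y)
    define a where "a = (l - y) / \<alpha>"
    have "0 < a"
      using elim(1) \<open>\<alpha> < 0\<close> by (simp add: a_def divide_neg_neg)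
    moreover have "a * \<alpha> = l - y"
      using \<open>\<alpha> < 0\<close> by (simp add: a_def)
    moreover have "0 \<le> a * \<beta>"
      using \<open>0 < a\<close> \<open>0 < \<beta>\<close> by simp
    ultimately show ?case
      using elim(1) unfolding elim(2) a_def[symmetric] by linarith
  qed
  have "((\<lambda>y. (l - y) / \<alpha>) \<longlongrightarrow> (l - l) / \<alpha>) (at_right l)"
    using assms by (intro tendsto_intros) auto
  then show "(abar l r \<mu> \<longlongrightarrow> 0) (at_right l)"
    using tendsto_cong[OF eq] by simp
qed

lemma abar_at_right_end:
  assumes "Inf (msupp \<mu>) = \<alpha>" "Sup (msupp \<mu>) = \<beta>" "\<alpha> < 0" "0 < \<beta>" "l < r"
  shows "eventually (\<lambda>y. 0 < abar l r \<mu> y \<and> y + abar l r \<mu> y * \<alpha> \<le> r \<and> r \<le> y + abar l r \<mu> y * \<beta>)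
           (at_left r)"
    and "(abar l r \<mu> \<longlongrightarrow> 0) (at_left r)"
proof -
  have lim: "((\<lambda>y. (l - y) / \<alpha> - (r - y) / \<beta>) \<longlongrightarrow> (l - r) / \<alpha> - (r - r) / \<beta>) (at_left r)"
    using assms by (intro tendsto_intros) auto
  have "0 < (l - r) / \<alpha> - (r - r) / \<beta>"
    using assms by (simp add: divide_neg_neg)
  then have "eventually (\<lambda>y. 0 < (l - y) / \<alpha> - (r - y) / \<beta>) (at_left r)"
    by (rule order_tendstoD(1)[OF lim])
  then have eq: "eventually (\<lambda>y. abar l r \<mu> y = (r - y) / \<beta>) (at_left r)"
    by eventually_elim (simp add: abar_def assms(1,2))
  with eventually_at_left_real[OF \<open>l < r\<close>]
  show "eventually (\<lambda>y. 0 < abar l r \<mu> y \<and> y + abar l r \<mu> y * \<alpha> \<le> r \<and> r \<le> y + abar l r \<mu> y * \<beta>)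
          (at_left r)"
  proof eventually_elim
    case (elim y)
    define a where "a = (r - y) / \<beta>"
    have "0 < a"
      using elim(1) \<open>0 < \<beta>\<close> by (simp add: a_def)
    moreover have "a * \<beta> = r - y"
      using \<open>0 < \<beta>\<close> by (simp add: a_def)
    moreover have "a * \<alpha> \<le> 0"
      using \<open>0 < a\<close> \<open>\<alpha> < 0\<close> by (simp add: mult_pos_neg less_imp_le)
    ultimately show ?case
      using elim(1) unfolding elim(2) a_def[symmetric] by auto
  qed
  have "((\<lambda>y. (r - y) / \<beta>) \<longlongrightarrow> (r - r) / \<beta>) (at_left r)"
    using assms by (intro tendsto_intros) auto
  then show "(abar l r \<mu> \<longlongrightarrow> 0) (at_left r)"
    using tendsto_cong[OF eq] by simp
qed

theorem mainTheorem11: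
  fixes l r m :: real and \<eta> :: "real \<Rightarrow> real" and \<mu> :: "real measure"
  assumes lr: "l < r"
    and eta_borel: "\<eta> \<in> borel_measurable borel"
    and eta_nz: "\<And>x. x \<in> {l<..<r} \<Longrightarrow> \<eta> x \<noteq> 0"
    and eta_zero: "\<And>x. x \<notin> {l<..<r} \<Longrightarrow> \<eta> x = 0"
    and loc_int: "\<And>a b. l < a \<Longrightarrow> b < r \<Longrightarrow> set_integrable lborel {a..b} (\<lambda>z. 1 / (\<eta> z)\<^sup>2)"
    and m_in: "m \<in> {l<..<r}"
    and prob: "prob_space \<mu>"
    and sets_mu: "sets \<mu> = sets borel"
    and mu_int: "integrable \<mu> (\<lambda>x. x)"
    and centered: "(\<integral>x. x \<partial>\<mu>) = 0"
    and not_dirac: "\<mu> \<noteq> return borel 0"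
    and supp_below: "bdd_below (msupp \<mu>)"
    and supp_above: "bdd_above (msupp \<mu>)"
  shows "(Limsup (at_right l) (\<lambda>x. ereal (\<bar>\<eta> x\<bar> / (x - l))) < \<infinity> \<longrightarrow>
            ((\<lambda>x. qfun \<eta> m x) \<longlongrightarrow> \<infinity>) (at_right l) \<longrightarrow>
            Liminf (at_right l) (\<lambda>y. Gfun \<eta> \<mu> y (abar l r \<mu> y)) > 0)
       \<and> (Limsup (at_left r) (\<lambda>x. ereal (\<bar>\<eta> x\<bar> / (r - x))) < \<infinity> \<longrightarrow>
            ((\<lambda>x. qfun \<eta> m x) \<longlongrightarrow> \<infinity>) (at_left r) \<longrightarrow>
            Liminf (at_left r) (\<lambda>y. Gfun \<eta> \<mu> y (abar l r \<mu> y)) > 0)"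
proof -
  define \<alpha> \<beta> where "\<alpha> = Inf (msupp \<mu>)" and "\<beta> = Sup (msupp \<mu>)"
  have ae: "AE x in \<mu>. \<alpha> \<le> x \<and> x \<le> \<beta>"
    using AE_in_msupp[OF sets_mu] by eventually_elim
      (auto simp: \<alpha>_def \<beta>_def intro: cInf_lower cSup_upper supp_below supp_above)
  have nonzero: "\<not> (AE x in \<mu>. x = 0)"
    using prob sets_mu not_dirac by (rule not_AE_eq_zero)
  have \<alpha>: "\<alpha> < 0" and \<beta>: "0 < \<beta>"
    using centered_bounds_sign[OF mu_int centered nonzero ae] by auto
  note Liminf_pos = Liminf_Gfun_pos_of_eta_linear[OF sets_mu nonzero ae \<alpha> \<beta>]
  have left: "0 < Liminf (at_right l) (\<lambda>y. Gfun \<eta> \<mu> y (abar l r \<mu> y))"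
    if "Limsup (at_right l) (\<lambda>x. ereal (\<bar>\<eta> x\<bar> / (x - l))) < \<infinity>"
  proof (rule eta_linear_bound_at_left_end[OF _ that])
    show "\<And>z. z \<le> l \<Longrightarrow> \<eta> z = 0"
      using eta_zero by simp
  qed (use Liminf_pos abar_at_left_end[OF \<alpha>_def[symmetric] \<beta>_def[symmetric] \<alpha> \<beta> lr] in blast)
  have right: "0 < Liminf (at_left r) (\<lambda>y. Gfun \<eta> \<mu> y (abar l r \<mu> y))"
    if "Limsup (at_left r) (\<lambda>x. ereal (\<bar>\<eta> x\<bar> / (r - x))) < \<infinity>"
  proof (rule eta_linear_bound_at_right_end[OF _ that])
    show "\<And>z. r \<le> z \<Longrightarrow> \<eta> z = 0"
      using eta_zero by simp
  qed (use Liminf_pos abar_at_right_end[OF \<alpha>_def[symmetric] \<beta>_def[symmetric] \<alpha> \<beta> lr] in blast)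
  show ?thesis
    using left right by blast
qed

end
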